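(* Let $\{\eta_n\}_{n\ge1}$ be real random variables, $\eta_n$ defined on a probability space $\Omega_n$, and let $\{\phi_{n,x}\}_{n\ge1,x\in\mathbb R}$ be real random variables with $\phi_{n,x}$ defined on $\Omega_n$. Assume: (1) $0\le\phi_{n,x}\le\phi_{n,y}\le1$ for all $n\ge1$ and $x\le y$; (2) for every $\varepsilon>0$ there is $M>0$ such that for all $n$, $x\in\mathbb R$ and $\omega\in\Omega_n$ with $\eta_n(\omega)-x>M$ we have $\phi_{n,x}(\omega)<\varepsilon$; (3) for every $\varepsilon>0$ there is $M>0$ such that for all $n$, $x\in\mathbb R$ and $\omega\in\Omega_n$ with $\eta_n(\omega)-x<-M$ we have $\phi_{n,x}(\omega)>1-\varepsilon$; (4) there is a constant $c>0$ independent of $n$ such that for all $n$, $x\in\mathbb R$ and $\omega\in\Omega_n$ with $x<\eta_n(\omega)\le x+1$ we have $\phi_{n,x+1}(\omega)-\phi_{n,x}(\omega)\ge c$. Then the sequence of random variables $\{\eta_n\}_{n\ge1}$ and the sequence of non-decreasing functions $\{F_n(x):=\mathbb E\,\phi_{n,x}\}_{n\ge1}$ are asymptotically equivalent.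
   Context: A sequence $\{\eta_n\}_{n\ge1}$ of real random variables spreads if $\lim_{n\to\infty}\sup_{x\in\mathbb R}\mathrm{Prob}\{x<\eta_n\le x+1\}=0$. A sequence $\{F_n\}_{n\ge1}$ of non-decreasing functions $\mathbb R\to\mathbb R$ spreads if $\lim_{n\to\infty}\sup_{x\in\mathbb R}(F_n(x+1)-F_n(x))=0$. A sequence of real random variables $\{\eta_n\}$ and a sequence of non-decreasing functions $\{F_n\}$ are asymptotically equivalent if (i) $\{\eta_n\}$ spreads if and only if $\{F_n\}$ spreads, and (ii) when both spread, $\lim_{n\to\infty}\sup_{x\in\mathbb R}(\mathrm{Prob}\{\eta_n\le x\}-F_n(x))=0$. Two sequences of real random variables $\{\eta_n\},\{\zeta_n\}$ are asymptotically equivalent if $\{\eta_n\}$ spreads iff $\{\zeta_n\}$ spreads, and when both spread $\lim_{n\to\infty}\sup_x(\mathrm{Prob}\{\eta_n\le x\}-\mathrm{Prob}\{\zeta_n\le x\})=0$. The same notions apply to families indexed by other index sets with a limit point in place of $n\to\infty$. *)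

theory Defs
  imports "HOL-Probability.Probability"
begin

definition spreads_rv :: "(nat \<Rightarrow> 'a measure) \<Rightarrow> (nat \<Rightarrow> 'a \<Rightarrow> real) \<Rightarrow> bool" where
  "spreads_rv M eta \<longleftrightarrow>
     (\<lambda>n. SUP x::real. measure (M n) {\<omega> \<in> space (M n). x < eta n \<omega> \<and> eta n \<omega> \<le> x + 1})
       \<longlonglongrightarrow> 0"

definition spreads_fun :: "(nat \<Rightarrow> real \<Rightarrow> real) \<Rightarrow> bool" where
  "spreads_fun F \<longleftrightarrow> (\<lambda>n. SUP x::real. F n (x + 1) - F n x) \<longlonglongrightarrow> 0"

definition asymp_equiv_rv_fun ::
    "(nat \<Rightarrow> 'a measure) \<Rightarrow> (nat \<Rightarrow> 'a \<Rightarrow> real) \<Rightarrow> (nat \<Rightarrow> real \<Rightarrow> real) \<Rightarrow> bool" where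
  "asymp_equiv_rv_fun M eta F \<longleftrightarrow>
     (spreads_rv M eta \<longleftrightarrow> spreads_fun F) \<and>
     (spreads_rv M eta \<and> spreads_fun F \<longrightarrow>
        (\<lambda>n. SUP x::real. measure (M n) {\<omega> \<in> space (M n). eta n \<omega> \<le> x} - F n x)
          \<longlonglongrightarrow> 0)"

end

theory Submission
  imports Defs
begin

text \<open>
  Outside the window \<open>x - B - 1 < \<eta>\<^sub>n \<le> x + B + 1\<close> the tail conditions force
  \<open>\<phi>\<^sub>n\<^sub>,\<^sub>x\<close> and \<open>\<phi>\<^sub>n\<^sub>,\<^sub>x\<^sub>+\<^sub>1\<close> to within \<open>\<epsilon>\<close> of the indicator of
  \<open>\<eta>\<^sub>n \<le> x\<close>, and the window is covered by \<open>\<lceil>2B + 2\<rceil>\<close> unit windows. Hence both the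
  increment \<open>F\<^sub>n(x+1) - F\<^sub>n(x)\<close> and the gap \<open>P(\<eta>\<^sub>n \<le> x) - F\<^sub>n(x)\<close> are at most
  \<open>\<epsilon> + K\<^sub>\<epsilon>\<cdot>S\<^sub>n\<close>, where \<open>S\<^sub>n\<close> is the largest unit-window probability: if \<open>\<eta>\<^sub>n\<close>
  spreads, so does \<open>F\<^sub>n\<close> and the two are close. Conversely the jump condition gives
  \<open>c\<cdot>P(x < \<eta>\<^sub>n \<le> x + 1) \<le> F\<^sub>n(x+1) - F\<^sub>n(x)\<close>, so spreading of \<open>F\<^sub>n\<close> forces spreading of \<open>\<eta>\<^sub>n\<close>.
\<close>

lemma tendsto_zero_if_eps_bounded:
  fixes X S :: "nat \<Rightarrow> real"
  assumes S: "S \<longlonglongrightarrow> 0"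
    and bound: "\<And>e. e > 0 \<Longrightarrow> \<exists>K. \<forall>n. \<bar>X n\<bar> \<le> e + K * S n"
  shows "X \<longlonglongrightarrow> 0"
proof (rule tendstoI)
  fix r :: real
  assume "r > 0"
  then obtain K where K: "\<And>n. \<bar>X n\<bar> \<le> r / 2 + K * S n"
    using bound[of "r / 2"] by auto
  have "\<forall>\<^sub>F n in sequentially. K * S n < r / 2"
    using order_tendstoD(2)[OF tendsto_mult_right_zero[OF S], of "r / 2"] \<open>r > 0\<close> by simp
  then show "\<forall>\<^sub>F n in sequentially. dist (X n) 0 < r"
  proof (rule eventually_mono)
    fix n
    assume "K * S n < r / 2"
    then show "dist (X n) 0 < r"
      using K[of n] by (simp add: dist_real_def)
  qed
qed

lemma measure_window_le_mult:
  fixes f :: "'a \<Rightarrow> real"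
  assumes f: "f \<in> borel_measurable M"
    and unit: "\<And>x. measure M {\<omega> \<in> space M. x < f \<omega> \<and> f \<omega> \<le> x + 1} \<le> s"
  shows "measure M {\<omega> \<in> space M. a < f \<omega> \<and> f \<omega> \<le> a + real k} \<le> real k * s"
proof (induction k)
  case 0
  have "{\<omega> \<in> space M. a < f \<omega> \<and> f \<omega> \<le> a + real 0} = {}"
    by auto
  then show ?case
    by (simp only: measure_empty)
next
  case (Suc k)
  let ?W = "\<lambda>b l. {\<omega> \<in> space M. b < f \<omega> \<and> f \<omega> \<le> b + l}"
  have "?W a (real (Suc k)) = ?W a (real k) \<union> ?W (a + real k) 1"
    by auto
  moreover have "measure M (?W a (real k) \<union> ?W (a + real k) 1)
      \<le> measure M (?W a (real k)) + measure M (?W (a + real k) 1)"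
    by (rule measure_Un_le; use f in measurable)
  ultimately have "measure M (?W a (real (Suc k))) \<le> measure M (?W a (real k)) + measure M (?W (a + real k) 1)"
    by simp
  then show ?case
    using Suc unit[of "a + real k"] by (simp add: algebra_simps)
qed

lemma (in prob_space) abs_expectation_le_plus_prob:
  fixes h :: "'a \<Rightarrow> real"
  assumes h: "random_variable borel h" and A: "A \<in> events"
    and bound: "\<And>\<omega>. \<omega> \<in> space M \<Longrightarrow> \<bar>h \<omega>\<bar> \<le> \<epsilon> + indicator A \<omega>"
  shows "\<bar>expectation h\<bar> \<le> \<epsilon> + prob A"
proof -
  have "AE \<omega> in M. norm (h \<omega>) \<le> \<epsilon> + 1"
    using bound by (intro AE_I2) (smt (verit) indicator_le_1 real_norm_def)
  then have "integrable M h"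
    using h by (rule integrable_const_bound)
  have "\<bar>expectation h\<bar> \<le> expectation (\<lambda>\<omega>. \<bar>h \<omega>\<bar>)"
    by (rule integral_abs_bound)
  also have "\<dots> \<le> expectation (\<lambda>\<omega>. \<epsilon> + indicator A \<omega>)"
    by (rule integral_mono) (use \<open>integrable M h\<close> A bound in \<open>auto simp: less_top[symmetric]\<close>)
  also have "\<dots> = \<epsilon> + prob A"
    using A by (simp add: prob_space less_top[symmetric])
  finally show ?thesis .
qed

lemma (in prob_space) smoothed_indicator_bounds:
  fixes f :: "'a \<Rightarrow> real" and g :: "real \<Rightarrow> 'a \<Rightarrow> real" and x :: real
  assumes f: "random_variable borel f" and g: "\<And>x. random_variable borel (g x)"
    and mono01: "\<And>x y \<omega>. \<omega> \<in> space M \<Longrightarrow> x \<le> y \<Longrightarrow>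
                   0 \<le> g x \<omega> \<and> g x \<omega> \<le> g y \<omega> \<and> g y \<omega> \<le> 1"
    and right_tail: "\<And>x \<omega>. \<omega> \<in> space M \<Longrightarrow> f \<omega> - x > B \<Longrightarrow> g x \<omega> < \<epsilon>"
    and left_tail: "\<And>x \<omega>. \<omega> \<in> space M \<Longrightarrow> f \<omega> - x < - B \<Longrightarrow> g x \<omega> > 1 - \<epsilon>"
    and "0 \<le> B" "0 \<le> \<epsilon>"
  defines "N \<equiv> {\<omega> \<in> space M. x - B - 1 < f \<omega> \<and> f \<omega> \<le> x + B + 1}"
  shows "expectation (g (x + 1)) - expectation (g x) \<le> \<epsilon> + prob N"
    and "\<bar>prob {\<omega> \<in> space M. f \<omega> \<le> x} - expectation (g x)\<bar> \<le> \<epsilon> + prob N"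
proof -
  define J where "J = {\<omega> \<in> space M. f \<omega> \<le> x}"
  have N: "N \<in> events" and J: "J \<in> events"
    unfolding N_def J_def using f by measurable
  have int: "integrable M (g y)" for y
    by (rule integrable_const_bound[where B=1]) (use mono01[of _ y y] g in auto)
  have tails: "g (x + 1) \<omega> < \<epsilon> \<and> \<omega> \<notin> J \<or> g x \<omega> > 1 - \<epsilon> \<and> \<omega> \<in> J"
    if \<omega>: "\<omega> \<in> space M" "\<omega> \<notin> N" for \<omega>
  proof (cases "f \<omega> > x + B + 1")
    case True
    then show ?thesis
      using right_tail[OF \<omega>(1), of "x + 1"] \<open>0 \<le> B\<close> unfolding J_def by auto
  next
    case False
    then have "f \<omega> \<le> x - B - 1"
      using \<omega> unfolding N_def by auto
    then show ?thesis
      using left_tail[OF \<omega>(1), of x] \<omega>(1) \<open>0 \<le> B\<close> unfolding J_def by auto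
  qed
  have "\<bar>expectation (\<lambda>\<omega>. g (x + 1) \<omega> - g x \<omega>)\<bar> \<le> \<epsilon> + prob N"
  proof (rule abs_expectation_le_plus_prob[OF _ N])
    fix \<omega>
    assume \<omega>: "\<omega> \<in> space M"
    show "\<bar>g (x + 1) \<omega> - g x \<omega>\<bar> \<le> \<epsilon> + indicator N \<omega>"
      using mono01[OF \<omega>, of x "x + 1"] tails[OF \<omega>] \<open>0 \<le> \<epsilon>\<close> by (cases "\<omega> \<in> N") auto
  qed (use g in measurable)
  then show "expectation (g (x + 1)) - expectation (g x) \<le> \<epsilon> + prob N"
    using int by simp
  have "\<bar>expectation (\<lambda>\<omega>. indicator J \<omega> - g x \<omega>)\<bar> \<le> \<epsilon> + prob N"
  proof (rule abs_expectation_le_plus_prob[OF _ N])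
    fix \<omega>
    assume \<omega>: "\<omega> \<in> space M"
    show "\<bar>indicator J \<omega> - g x \<omega>\<bar> \<le> \<epsilon> + indicator N \<omega>"
      using mono01[OF \<omega>, of x "x + 1"] tails[OF \<omega>] \<open>0 \<le> \<epsilon>\<close>
      by (cases "\<omega> \<in> N") (auto simp: indicator_def)
  qed (use g J in measurable)
  then show "\<bar>prob {\<omega> \<in> space M. f \<omega> \<le> x} - expectation (g x)\<bar> \<le> \<epsilon> + prob N"
    using int J unfolding J_def by (simp add: less_top[symmetric])
qed

locale smoothed_indicator_family =
  fixes M :: "nat \<Rightarrow> 'a measure"
    and eta :: "nat \<Rightarrow> 'a \<Rightarrow> real"
    and phi :: "nat \<Rightarrow> real \<Rightarrow> 'a \<Rightarrow> real"
    and c :: real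
  assumes prob: "\<And>n. prob_space (M n)"
    and eta_meas: "\<And>n. eta n \<in> borel_measurable (M n)"
    and phi_meas: "\<And>n x. phi n x \<in> borel_measurable (M n)"
    and mono01: "\<And>n x y \<omega>. \<omega> \<in> space (M n) \<Longrightarrow> x \<le> y \<Longrightarrow>
                   0 \<le> phi n x \<omega> \<and> phi n x \<omega> \<le> phi n y \<omega> \<and> phi n y \<omega> \<le> 1"
    and right_tail: "\<And>\<epsilon>. \<epsilon> > 0 \<Longrightarrow> \<exists>B > 0. \<forall>n x. \<forall>\<omega> \<in> space (M n).
                   eta n \<omega> - x > B \<longrightarrow> phi n x \<omega> < \<epsilon>"
    and left_tail: "\<And>\<epsilon>. \<epsilon> > 0 \<Longrightarrow> \<exists>B > 0. \<forall>n x. \<forall>\<omega> \<in> space (M n).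
                   eta n \<omega> - x < - B \<longrightarrow> phi n x \<omega> > 1 - \<epsilon>"
    and c_pos: "c > 0"
    and jump: "\<And>n x \<omega>. \<omega> \<in> space (M n) \<Longrightarrow> x < eta n \<omega> \<Longrightarrow> eta n \<omega> \<le> x + 1 \<Longrightarrow>
                   c \<le> phi n (x + 1) \<omega> - phi n x \<omega>"
begin

abbreviation F :: "nat \<Rightarrow> real \<Rightarrow> real"
  where "F n x \<equiv> integral\<^sup>L (M n) (phi n x)"

abbreviation cdf :: "nat \<Rightarrow> real \<Rightarrow> real"
  where "cdf n x \<equiv> measure (M n) {\<omega> \<in> space (M n). eta n \<omega> \<le> x}"

abbreviation window_prob :: "nat \<Rightarrow> real \<Rightarrow> real"
  where "window_prob n x \<equiv> measure (M n) {\<omega> \<in> space (M n). x < eta n \<omega> \<and> eta n \<omega> \<le> x + 1}"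

abbreviation max_window_prob :: "nat \<Rightarrow> real"
  where "max_window_prob n \<equiv> SUP x. window_prob n x"

abbreviation max_increment :: "nat \<Rightarrow> real"
  where "max_increment n \<equiv> SUP x. F n (x + 1) - F n x"

abbreviation max_cdf_gap :: "nat \<Rightarrow> real"
  where "max_cdf_gap n \<equiv> SUP x. cdf n x - F n x"

lemma integrable_phi: "integrable (M n) (phi n x)"
proof -
  interpret prob_space "M n"
    by (rule prob)
  show ?thesis
    by (rule integrable_const_bound[where B=1]) (use mono01[of _ n x x] phi_meas in auto)
qed

lemma F_mono: "x \<le> y \<Longrightarrow> F n x \<le> F n y"
  by (rule integral_mono) (use integrable_phi mono01 in auto)

lemma F_nonneg: "0 \<le> F n x"
  using mono01[of _ n x x] by (intro integral_nonneg_AE) auto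

lemma F_le_1: "F n x \<le> 1"
proof -
  interpret prob_space "M n"
    by (rule prob)
  have "F n x \<le> integral\<^sup>L (M n) (\<lambda>_. 1)"
    by (rule integral_mono) (use integrable_phi mono01[of _ n x x] in auto)
  then show ?thesis
    by (simp add: prob_space)
qed

lemma window_prob_le_max: "window_prob n x \<le> max_window_prob n"
  by (rule cSUP_upper) (auto intro!: bdd_aboveI2 prob_space.prob_le_1[OF prob])

lemma increment_le_max: "F n (x + 1) - F n x \<le> max_increment n"
proof (rule cSUP_upper)
  show "bdd_above (range (\<lambda>x. F n (x + 1) - F n x))"
    by (rule bdd_aboveI2[where M=1]) (smt (verit) F_nonneg F_le_1)
qed simp

lemma cdf_gap_le_max: "cdf n x - F n x \<le> max_cdf_gap n"
proof (rule cSUP_upper)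
  show "bdd_above (range (\<lambda>x. cdf n x - F n x))"
    by (rule bdd_aboveI2[where M=1]) (smt (verit) F_nonneg prob_space.prob_le_1[OF prob])
qed simp

lemma max_window_prob_nonneg: "0 \<le> max_window_prob n"
  using window_prob_le_max[of n 0] by (meson measure_nonneg order_trans)

lemma max_increment_nonneg: "0 \<le> max_increment n"
  using increment_le_max[of n 0] F_mono[of 0 1 n] by simp

lemma window_prob_le_increment: "c * window_prob n x \<le> F n (x + 1) - F n x"
proof -
  interpret prob_space "M n"
    by (rule prob)
  let ?A = "{\<omega> \<in> space (M n). x < eta n \<omega> \<and> eta n \<omega> \<le> x + 1}"
  have A: "?A \<in> events"
    using eta_meas[of n] by measurable
  have "c * window_prob n x = expectation (\<lambda>\<omega>. c * indicator ?A \<omega>)"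
    using A by (simp add: less_top[symmetric])
  also have "\<dots> \<le> expectation (\<lambda>\<omega>. phi n (x + 1) \<omega> - phi n x \<omega>)"
  proof (rule integral_mono)
    fix \<omega>
    assume \<omega>: "\<omega> \<in> space (M n)"
    show "c * indicator ?A \<omega> \<le> phi n (x + 1) \<omega> - phi n x \<omega>"
      using jump[OF \<omega>, of x] mono01[OF \<omega>, of x "x + 1"] by (auto simp: indicator_def)
  qed (use A integrable_phi in \<open>simp_all add: less_top[symmetric]\<close>)
  also have "\<dots> = F n (x + 1) - F n x"
    using integrable_phi by simp
  finally show ?thesis .
qed

lemma max_window_prob_le: "max_window_prob n \<le> max_increment n / c"
proof (rule cSUP_least)
  fix x
  show "window_prob n x \<le> max_increment n / c"
    using window_prob_le_increment[of n x] increment_le_max[of n x] c_pos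
    by (simp add: field_simps)
qed simp

lemma prob_wide_window_le:
  assumes "2 * B + 2 \<le> real K"
  shows "measure (M n) {\<omega> \<in> space (M n). x - B - 1 < eta n \<omega> \<and> eta n \<omega> \<le> x + B + 1}
           \<le> real K * max_window_prob n"
proof -
  interpret prob_space "M n"
    by (rule prob)
  have "{\<omega> \<in> space (M n). x - B - 1 < eta n \<omega> \<and> eta n \<omega> \<le> x + B + 1}
          \<subseteq> {\<omega> \<in> space (M n). x - B - 1 < eta n \<omega> \<and> eta n \<omega> \<le> (x - B - 1) + real K}"
    using assms by auto
  then have "measure (M n) {\<omega> \<in> space (M n). x - B - 1 < eta n \<omega> \<and> eta n \<omega> \<le> x + B + 1}
          \<le> measure (M n) {\<omega> \<in> space (M n). x - B - 1 < eta n \<omega> \<and> eta n \<omega> \<le> (x - B - 1) + real K}"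
    by (rule finite_measure_mono) (use eta_meas in measurable)
  also have "\<dots> \<le> real K * max_window_prob n"
    by (rule measure_window_le_mult[OF eta_meas window_prob_le_max])
  finally show ?thesis .
qed

lemma uniform_tails:
  assumes "\<epsilon> > 0"
  obtains B where "B > 0"
    and "\<And>n x \<omega>. \<omega> \<in> space (M n) \<Longrightarrow> eta n \<omega> - x > B \<Longrightarrow> phi n x \<omega> < \<epsilon>"
    and "\<And>n x \<omega>. \<omega> \<in> space (M n) \<Longrightarrow> eta n \<omega> - x < - B \<Longrightarrow> phi n x \<omega> > 1 - \<epsilon>"
proof -
  obtain B1 where "B1 > 0" and B1: "\<forall>n x. \<forall>\<omega> \<in> space (M n). eta n \<omega> - x > B1 \<longrightarrow> phi n x \<omega> < \<epsilon>"
    using right_tail[OF assms] by blast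
  obtain B2 where B2: "\<forall>n x. \<forall>\<omega> \<in> space (M n). eta n \<omega> - x < - B2 \<longrightarrow> phi n x \<omega> > 1 - \<epsilon>"
    using left_tail[OF assms] by blast
  show thesis
  proof (rule that[of "max B1 B2"])
    show "max B1 B2 > 0"
      using \<open>B1 > 0\<close> by simp
    show "phi n x \<omega> < \<epsilon>" if "\<omega> \<in> space (M n)" "eta n \<omega> - x > max B1 B2" for n x \<omega>
      using B1 that by simp
    show "phi n x \<omega> > 1 - \<epsilon>" if "\<omega> \<in> space (M n)" "eta n \<omega> - x < - max B1 B2" for n x \<omega>
      using B2 that by simp
  qed
qed

lemma increment_and_cdf_gap_le:
  assumes "\<epsilon> > 0"
  obtains K where "\<And>n x. F n (x + 1) - F n x \<le> \<epsilon> + K * max_window_prob n"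
    and "\<And>n x. \<bar>cdf n x - F n x\<bar> \<le> \<epsilon> + K * max_window_prob n"
proof -
  obtain B where "B > 0" and right: "\<And>n x \<omega>. \<omega> \<in> space (M n) \<Longrightarrow> eta n \<omega> - x > B \<Longrightarrow> phi n x \<omega> < \<epsilon>"
    and left: "\<And>n x \<omega>. \<omega> \<in> space (M n) \<Longrightarrow> eta n \<omega> - x < - B \<Longrightarrow> phi n x \<omega> > 1 - \<epsilon>"
    using uniform_tails[OF assms] by blast
  define K where "K = nat \<lceil>2 * B + 2\<rceil>"
  have K: "2 * B + 2 \<le> real K"
    unfolding K_def by linarith
  have "F n (x + 1) - F n x \<le> \<epsilon> + real K * max_window_prob n \<and>
        \<bar>cdf n x - F n x\<bar> \<le> \<epsilon> + real K * max_window_prob n" for n x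
  proof -
    interpret prob_space "M n"
      by (rule prob)
    let ?N = "{\<omega> \<in> space (M n). x - B - 1 < eta n \<omega> \<and> eta n \<omega> \<le> x + B + 1}"
    have "F n (x + 1) - F n x \<le> \<epsilon> + prob ?N"
      by (rule smoothed_indicator_bounds)
        (use eta_meas phi_meas mono01 right left \<open>B > 0\<close> assms in auto)
    moreover have "\<bar>cdf n x - F n x\<bar> \<le> \<epsilon> + prob ?N"
      by (rule smoothed_indicator_bounds)
        (use eta_meas phi_meas mono01 right left \<open>B > 0\<close> assms in auto)
    ultimately show ?thesis
      using prob_wide_window_le[OF K, of n x] by linarith
  qed
  then show thesis
    by (intro that) auto
qed

lemma max_increment_and_cdf_gap_le:
  assumes "\<epsilon> > 0"
  obtains K where "\<And>n. \<bar>max_increment n\<bar> \<le> \<epsilon> + K * max_window_prob n"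
    and "\<And>n. \<bar>max_cdf_gap n\<bar> \<le> \<epsilon> + K * max_window_prob n"
proof -
  obtain K where increment: "\<And>n x. F n (x + 1) - F n x \<le> \<epsilon> + K * max_window_prob n"
    and gap: "\<And>n x. \<bar>cdf n x - F n x\<bar> \<le> \<epsilon> + K * max_window_prob n"
    using increment_and_cdf_gap_le[OF assms] by blast
  show thesis
  proof (rule that)
    fix n
    have "max_increment n \<le> \<epsilon> + K * max_window_prob n"
      by (rule cSUP_least) (use increment in auto)
    then show "\<bar>max_increment n\<bar> \<le> \<epsilon> + K * max_window_prob n"
      using max_increment_nonneg[of n] by simp
    have "max_cdf_gap n \<le> \<epsilon> + K * max_window_prob n"
      by (rule cSUP_least) (use gap in \<open>auto simp: abs_le_iff\<close>)
    moreover have "- (\<epsilon> + K * max_window_prob n) \<le> max_cdf_gap n"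
      using cdf_gap_le_max[of n 0] gap[of n 0] by (auto simp: abs_le_iff)
    ultimately show "\<bar>max_cdf_gap n\<bar> \<le> \<epsilon> + K * max_window_prob n"
      unfolding abs_le_iff by linarith
  qed
qed

theorem asymp_equiv: "asymp_equiv_rv_fun M eta F"
proof -
  have "max_window_prob \<longlonglongrightarrow> 0" if "max_increment \<longlonglongrightarrow> 0"
  proof (rule Lim_null_comparison)
    show "\<forall>\<^sub>F n in sequentially. norm (max_window_prob n) \<le> max_increment n / c"
      using max_window_prob_nonneg max_window_prob_le by simp
    show "(\<lambda>n. max_increment n / c) \<longlonglongrightarrow> 0"
      using tendsto_divide_zero[OF that] by simp
  qed
  moreover have "max_increment \<longlonglongrightarrow> 0" if "max_window_prob \<longlonglongrightarrow> 0"
    by (rule tendsto_zero_if_eps_bounded[OF that]) (use max_increment_and_cdf_gap_le in blast)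
  moreover have "max_cdf_gap \<longlonglongrightarrow> 0" if "max_window_prob \<longlonglongrightarrow> 0"
    by (rule tendsto_zero_if_eps_bounded[OF that]) (use max_increment_and_cdf_gap_le in blast)
  ultimately show ?thesis
    unfolding asymp_equiv_rv_fun_def spreads_rv_def spreads_fun_def by blast
qed

end

theorem proposition5p3:
  fixes M :: "nat \<Rightarrow> 'a measure"
    and eta :: "nat \<Rightarrow> 'a \<Rightarrow> real"
    and phi :: "nat \<Rightarrow> real \<Rightarrow> 'a \<Rightarrow> real"
  assumes prob: "\<And>n. prob_space (M n)"
    and eta_meas: "\<And>n. eta n \<in> borel_measurable (M n)"
    and phi_meas: "\<And>n x. phi n x \<in> borel_measurable (M n)"
    and mono01: "\<And>n x y \<omega>. \<omega> \<in> space (M n) \<Longrightarrow> x \<le> y \<Longrightarrow>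
                   0 \<le> phi n x \<omega> \<and> phi n x \<omega> \<le> phi n y \<omega> \<and> phi n y \<omega> \<le> 1"
    and right_tail: "\<And>\<epsilon>. \<epsilon> > 0 \<Longrightarrow> \<exists>B > 0. \<forall>n x. \<forall>\<omega> \<in> space (M n).
                   eta n \<omega> - x > B \<longrightarrow> phi n x \<omega> < \<epsilon>"
    and left_tail: "\<And>\<epsilon>. \<epsilon> > 0 \<Longrightarrow> \<exists>B > 0. \<forall>n x. \<forall>\<omega> \<in> space (M n).
                   eta n \<omega> - x < - B \<longrightarrow> phi n x \<omega> > 1 - \<epsilon>"
    and jump: "\<exists>c > 0. \<forall>n x. \<forall>\<omega> \<in> space (M n).
                   x < eta n \<omega> \<and> eta n \<omega> \<le> x + 1 \<longrightarrow> phi n (x + 1) \<omega> - phi n x \<omega> \<ge> c"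
  shows "asymp_equiv_rv_fun M eta (\<lambda>n x. integral\<^sup>L (M n) (phi n x))"
proof -
  obtain c where "c > 0" and c_jump: "\<forall>n x. \<forall>\<omega> \<in> space (M n).
      x < eta n \<omega> \<and> eta n \<omega> \<le> x + 1 \<longrightarrow> phi n (x + 1) \<omega> - phi n x \<omega> \<ge> c"
    using jump by blast
  interpret smoothed_indicator_family M eta phi c
  proof (rule smoothed_indicator_family.intro)
    show "c \<le> phi n (x + 1) \<omega> - phi n x \<omega>"
      if "\<omega> \<in> space (M n)" "x < eta n \<omega>" "eta n \<omega> \<le> x + 1" for n x \<omega>
      using c_jump that by blast
  qed (fact prob eta_meas phi_meas mono01 right_tail left_tail \<open>c > 0\<close>)+
  show ?thesis
    by (rule asymp_equiv)
qed

end
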